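(* Suppose $\theta_0$ is the unique solution to $g(\theta)=0$ over $\Theta$ with $\theta_0$ in the interior of the compact set $\Theta$; there is $m<\infty$ with $\|Z\|<m$ and $\|W\|<m$ a.s.; and the conditional density $f_Y(y\mid W,Z)$ exists and is a.s. uniformly bounded in $y$ on the support of $Y$ by $\bar f$. Then for any $p\in[1,\infty]$, any estimator $\hat\theta_{\ell_p}$ that minimizes $\theta\mapsto\|\hat g(\theta)\|_p$ over $\Theta$ satisfies $\hat\theta_{\ell_p}\to\theta_0$ in probability.
   Context: Let $(Y_i,W_i,Z_i)$, $i=1,\dots,n$, be i.i.d. draws of $(Y,W,Z)$ with $Y\in\mathbb{R}$, $W\in\mathbb{R}^k$, $Z\in\mathbb{R}^k$. Fix $\tau\in(0,1)$. Define $g(\theta)=E[(1\{Y\le W'\theta\}-\tau)Z]$ and $\hat g(\theta)=\frac1n\sum_{i=1}^n(1\{Y_i\le W_i'\theta\}-\tau)Z_i$ for $\theta\in\Theta\subset\mathbb{R}^k$. *)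

theory Defs
  imports "HOL-Probability.Probability"
begin

definition lp_norm :: "ereal \<Rightarrow> real^'k \<Rightarrow> real" where
  "lp_norm p x =
     (if p = \<infinity> then Max (range (\<lambda>i. \<bar>x $ i\<bar>))
      else (\<Sum>i\<in>UNIV. \<bar>x $ i\<bar> powr real_of_ereal p) powr (1 / real_of_ereal p))"

text \<open>Population moment g(theta) = E[(1{Y <= W'theta} - tau) Z], with (Y,W,Z) the
  generic draw (observation 0 of the iid sequence).\<close>
definition g_pop :: "'a measure \<Rightarrow> ('a \<Rightarrow> real) \<Rightarrow> ('a \<Rightarrow> real^'k) \<Rightarrow> ('a \<Rightarrow> real^'k)
                      \<Rightarrow> real \<Rightarrow> real^'k \<Rightarrow> real^'k" where
  "g_pop M Y W Z \<tau> \<theta> =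
     integral\<^sup>L M (\<lambda>\<omega>. ((if Y \<omega> \<le> W \<omega> \<bullet> \<theta> then 1 else 0) - \<tau>) *\<^sub>R Z \<omega>)"

definition g_hat :: "(nat \<Rightarrow> 'a \<Rightarrow> real) \<Rightarrow> (nat \<Rightarrow> 'a \<Rightarrow> real^'k) \<Rightarrow> (nat \<Rightarrow> 'a \<Rightarrow> real^'k)
                      \<Rightarrow> real \<Rightarrow> nat \<Rightarrow> real^'k \<Rightarrow> 'a \<Rightarrow> real^'k" where
  "g_hat Y W Z \<tau> n \<theta> \<omega> =
     (1 / real n) *\<^sub>R (\<Sum>i<n. ((if Y i \<omega> \<le> W i \<omega> \<bullet> \<theta> then 1 else 0) - \<tau>) *\<^sub>R Z i \<omega>)"

end

theory Submission
  imports Defs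
begin

(* Let G(theta) be the max norm of g(theta). Because the conditional density of Y is bounded by
   fbar, the band {|Y - W'theta| <= r} has probability at most 3 r fbar; hence g is Lipschitz, G is
   continuous, and by compactness and identification G is bounded below by some eta > 0 outside
   every ball around theta0. The same band estimate controls the summands at theta by those at the
   nearest point of a finite net of Theta, so finitely many weak laws of large numbers make
   ghat_n uniformly u-close to g on Theta outside events of vanishing probability. Since every
   l_p norm on R^k lies between the max norm and k times it, on those events the minimiser
   satisfies G(thetahat) <= (k + 1) u, and (k + 1) u < eta forces thetahat into the ball. *)

section \<open>Probability estimates\<close>

lemma set_integral_Icc_le:
  fixes g :: "real \<Rightarrow> real"
  assumes "\<And>y. g y \<le> c" "a \<le> b" "0 \<le> c"
  shows "(LBINT y:{a..b}. g y) \<le> (b - a) * c"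
proof -
  have "(LBINT y:{a..b}. g y) \<le> (LBINT y:{a..b}. c)"
    unfolding set_lebesgue_integral_def
  proof (rule integral_mono_AE')
    show "integrable lborel (\<lambda>y. indicator {a..b} y *\<^sub>R c)"
      using \<open>a \<le> b\<close> by (intro integrable_indicator) (auto simp: emeasure_lborel_Icc)
  qed (use assms in \<open>auto simp: indicator_def\<close>)
  also have "\<dots> = (b - a) * c"
    using \<open>a \<le> b\<close> by (simp add: emeasure_lborel_Icc set_lebesgue_integral_def)
  finally show ?thesis .
qed

lemma half_open_strip_index:
  fixes a R r :: real
  assumes "0 < r" "\<bar>a\<bar> \<le> R"
  obtains j :: nat where "j \<le> nat \<lfloor>2 * R / r\<rfloor>" "-R + j * r \<le> a" "a < -R + j * r + r"
proof
  define q where "q = (a + R) / r"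
  have "0 \<le> q" "q \<le> 2 * R / r"
    using assms by (auto simp: q_def divide_right_mono)
  show "nat \<lfloor>q\<rfloor> \<le> nat \<lfloor>2 * R / r\<rfloor>"
    using \<open>q \<le> 2 * R / r\<close> by (intro nat_mono floor_mono)
  have "of_int \<lfloor>q\<rfloor> * r \<le> q * r" "q * r < (of_int \<lfloor>q\<rfloor> + 1) * r"
    using \<open>0 < r\<close> by (intro mult_right_mono mult_strict_right_mono; linarith)+
  moreover have "q * r = a + R" "real (nat \<lfloor>q\<rfloor>) = of_int \<lfloor>q\<rfloor>"
    using \<open>0 < r\<close> \<open>0 \<le> q\<close> by (simp_all add: q_def)
  ultimately show "-R + nat \<lfloor>q\<rfloor> * r \<le> a" "a < -R + nat \<lfloor>q\<rfloor> * r + r"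
    by (auto simp: algebra_simps)
qed

lemma disjoint_family_half_open_strips:
  fixes c r :: real
  assumes "0 < r"
  shows "disjoint_family (\<lambda>j :: nat. {c + j * r..<c + j * r + r})"
proof (unfold disjoint_family_on_def, intro ballI impI)
  fix i j :: nat assume "i \<noteq> j"
  have "\<not> (c + i * r \<le> x \<and> x < c + i * r + r \<and> c + j * r \<le> x \<and> x < c + j * r + r)" for x
  proof
    assume "c + i * r \<le> x \<and> x < c + i * r + r \<and> c + j * r \<le> x \<and> x < c + j * r + r"
    then have "real i * r < (real j + 1) * r" "real j * r < (real i + 1) * r"
      by (auto simp: algebra_simps)
    then have "real i < real j + 1" "real j < real i + 1"
      using \<open>0 < r\<close> by (metis mult_less_cancel_right_pos)+
    then show False using \<open>i \<noteq> j\<close> by linarith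
  qed
  then show "{c + i * r..<c + i * r + r} \<inter> {c + j * r..<c + j * r + r} = {}"
    unfolding disjoint_iff atLeastLessThan_iff by blast
qed

context prob_space
begin

lemma bounded_iid_mean_deviation_le:
  fixes X :: "nat \<Rightarrow> 'a \<Rightarrow> 'b::topological_space" and h :: "'b \<Rightarrow> real"
  assumes X: "\<And>i. random_variable borel (X i)"
    and indep: "indep_vars (\<lambda>_. borel) X UNIV"
    and ident: "\<And>i. distr M borel (X i) = distr M borel (X 0)"
    and h: "h \<in> borel_measurable borel" "\<And>x. \<bar>h x\<bar> \<le> B"
    and "0 < v" "0 < n"
  shows "prob {\<omega>\<in>space M. v \<le> \<bar>(\<Sum>i<n. h (X i \<omega>)) / real n - expectation (\<lambda>\<omega>. h (X 0 \<omega>))\<bar>}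
    \<le> 2 * exp (- (2 * v\<^sup>2 / (2 * B + 2)\<^sup>2) * real n)"
proof -
  have "0 \<le> B" using h(2)[of undefined] by linarith
  interpret Hoeffding_ineq_iid M "{..<n}" "\<lambda>i \<omega>. h (X i \<omega>)" "\<lambda>\<omega>. h (X 0 \<omega>)" "-B-1" "B+1"
    "expectation (\<lambda>\<omega>. h (X 0 \<omega>))"
  proof unfold_locales
    show "indep_vars (\<lambda>_. borel) (\<lambda>i \<omega>. h (X i \<omega>)) {..<n}"
      using indep_vars_subset[OF indep_vars_compose2[OF indep]] h(1) by auto
    show "distr M borel (\<lambda>\<omega>. h (X i \<omega>)) = distr M borel (\<lambda>\<omega>. h (X 0 \<omega>))" for i
      using distr_distr[OF h(1) X[of i]] distr_distr[OF h(1) X[of 0]] ident[of i]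
      by (simp add: comp_def)
    show "random_variable borel (\<lambda>\<omega>. h (X 0 \<omega>))" using X h(1) by measurable
    show "AE \<omega> in M. h (X 0 \<omega>) \<in> {-B-1..B+1}"
    proof (rule AE_I2)
      show "h (X 0 \<omega>) \<in> {-B-1..B+1}" for \<omega> using h(2)[of "X 0 \<omega>"] by (simp add: abs_le_iff)
    qed
  qed simp_all
  have "prob {\<omega>\<in>space M. v \<le> \<bar>(\<Sum>i<n. h (X i \<omega>)) / real (card {..<n}) - expectation (\<lambda>\<omega>. h (X 0 \<omega>))\<bar>}
    \<le> 2 * exp (-2 * real (card {..<n}) * v\<^sup>2 / ((B+1) - (-B-1))\<^sup>2)"
    using \<open>0 < v\<close> \<open>0 \<le> B\<close> \<open>0 < n\<close> by (intro Hoeffding_ineq_abs_ge') (auto simp: lessThan_empty_iff)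
  also have "-2 * real (card {..<n}) * v\<^sup>2 / ((B+1) - (-B-1))\<^sup>2 = - (2 * v\<^sup>2 / (2 * B + 2)\<^sup>2) * real n"
    by (simp add: field_simps)
  finally show ?thesis by simp
qed

lemma weak_law_bounded_iid:
  fixes X :: "nat \<Rightarrow> 'a \<Rightarrow> 'b::topological_space" and h :: "'b \<Rightarrow> real"
  assumes X: "\<And>i. random_variable borel (X i)"
    and indep: "indep_vars (\<lambda>_. borel) X UNIV"
    and ident: "\<And>i. distr M borel (X i) = distr M borel (X 0)"
    and h: "h \<in> borel_measurable borel" "\<And>x. \<bar>h x\<bar> \<le> B"
    and "0 < v"
  shows "(\<lambda>n. prob {\<omega>\<in>space M. v \<le> \<bar>(\<Sum>i<n. h (X i \<omega>)) / real n - expectation (\<lambda>\<omega>. h (X 0 \<omega>))\<bar>})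
           \<longlonglongrightarrow> 0"
proof (rule tendsto_sandwich[OF _ _ tendsto_const])
  define c where "c = 2 * v\<^sup>2 / (2 * B + 2)\<^sup>2"
  have "0 < c" using \<open>0 < v\<close> h(2)[of undefined] by (simp add: c_def)
  show "\<forall>\<^sub>F n in sequentially.
      prob {\<omega>\<in>space M. v \<le> \<bar>(\<Sum>i<n. h (X i \<omega>)) / real n - expectation (\<lambda>\<omega>. h (X 0 \<omega>))\<bar>}
      \<le> 2 * exp (- c * real n)"
    unfolding c_def using bounded_iid_mean_deviation_le[OF assms]
    by (intro eventually_sequentiallyI[of 1]) simp
  have "(\<lambda>n. 2 * exp (- c) ^ n) \<longlonglongrightarrow> 2 * 0"
    using \<open>0 < c\<close> by (intro tendsto_mult tendsto_const LIMSEQ_power_zero) auto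
  then show "(\<lambda>n. 2 * exp (- c * real n)) \<longlonglongrightarrow> 0"
    by (simp add: exp_of_nat_mult[symmetric] mult.commute)
qed simp

lemma prob_strip_le:
  fixes Y :: "'a \<Rightarrow> real" and V :: "'a \<Rightarrow> 'b::topological_space" and f :: "real \<times> 'b \<Rightarrow> real"
  assumes density: "\<And>A B. A \<in> sets borel \<Longrightarrow> B \<in> sets borel \<Longrightarrow>
      prob {\<omega>\<in>space M. Y \<omega> \<in> A \<and> V \<omega> \<in> B} = expectation (\<lambda>\<omega>. indicator B (V \<omega>) * (LBINT y:A. f (y, V \<omega>)))"
    and f_le: "AE \<omega> in M. \<forall>y. f (y, V \<omega>) \<le> fbar" and "0 \<le> fbar"
    and V: "random_variable borel V" and B: "B \<in> sets borel" and "a \<le> b"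
  shows "prob {\<omega>\<in>space M. Y \<omega> \<in> {a..b} \<and> V \<omega> \<in> B} \<le> (b - a) * fbar * prob {\<omega>\<in>space M. V \<omega> \<in> B}"
proof -
  have VB: "{\<omega>\<in>space M. V \<omega> \<in> B} \<in> events"
    using measurable_sets[OF V B] by (simp add: vimage_def Int_def conj_commute)
  have "prob {\<omega>\<in>space M. Y \<omega> \<in> {a..b} \<and> V \<omega> \<in> B}
      = expectation (\<lambda>\<omega>. indicator B (V \<omega>) * (LBINT y:{a..b}. f (y, V \<omega>)))"
    using B by (intro density) auto
  also have "\<dots> \<le> expectation (\<lambda>\<omega>. indicator {\<omega>\<in>space M. V \<omega> \<in> B} \<omega> * ((b - a) * fbar))"
  proof (rule integral_mono_AE')
    show "integrable M (\<lambda>\<omega>. indicator {\<omega>\<in>space M. V \<omega> \<in> B} \<omega> * ((b - a) * fbar))"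
      using VB by (intro integrable_mult_left integrable_real_indicator) (auto simp: less_top[symmetric])
    show "AE \<omega> in M. indicator B (V \<omega>) * (LBINT y:{a..b}. f (y, V \<omega>))
        \<le> indicator {\<omega>\<in>space M. V \<omega> \<in> B} \<omega> * ((b - a) * fbar)"
      using f_le
    proof (rule AE_mp[OF _ AE_I2[OF impI]])
      fix \<omega> assume "\<forall>y. f (y, V \<omega>) \<le> fbar" "\<omega> \<in> space M"
      then show "indicator B (V \<omega>) * (LBINT y:{a..b}. f (y, V \<omega>))
          \<le> indicator {\<omega>\<in>space M. V \<omega> \<in> B} \<omega> * ((b - a) * fbar)"
        using set_integral_Icc_le[of "\<lambda>y. f (y, V \<omega>)" fbar a b] \<open>a \<le> b\<close> \<open>0 \<le> fbar\<close>
        by (auto simp: indicator_def)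
    qed
  qed (use \<open>a \<le> b\<close> \<open>0 \<le> fbar\<close> in auto)
  also have "\<dots> = (b - a) * fbar * prob {\<omega>\<in>space M. V \<omega> \<in> B}"
    using VB by (simp add: mult.commute)
  finally show ?thesis .
qed

text \<open>Slice the range of \<open>s (V \<omega>)\<close> into strips of width \<open>r\<close>: on the strip starting at \<open>t\<close>
  the band forces \<open>Y \<omega>\<close> into \<open>[t - r, t + 2 r]\<close>, which has conditional probability at most
  \<open>3 r fbar\<close>, and the strips are disjoint.\<close>

lemma prob_band_le:
  fixes Y :: "'a \<Rightarrow> real" and V :: "'a \<Rightarrow> 'b::topological_space" and f :: "real \<times> 'b \<Rightarrow> real"
    and s :: "'b \<Rightarrow> real"
  assumes density: "\<And>A B. A \<in> sets borel \<Longrightarrow> B \<in> sets borel \<Longrightarrow>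
      prob {\<omega>\<in>space M. Y \<omega> \<in> A \<and> V \<omega> \<in> B} = expectation (\<lambda>\<omega>. indicator B (V \<omega>) * (LBINT y:A. f (y, V \<omega>)))"
    and f_le: "AE \<omega> in M. \<forall>y. f (y, V \<omega>) \<le> fbar" and "0 \<le> fbar"
    and Y: "random_variable borel Y" and V: "random_variable borel V"
    and s: "s \<in> borel_measurable borel" and s_bounded: "AE \<omega> in M. \<bar>s (V \<omega>)\<bar> \<le> R"
    and "0 < r"
  shows "prob {\<omega>\<in>space M. \<bar>Y \<omega> - s (V \<omega>)\<bar> \<le> r} \<le> 3 * r * fbar"
proof -
  define N where "N = nat \<lfloor>2 * R / r\<rfloor>"
  define t where "t j = -R + real j * r" for j
  define strip where "strip j = s -` {t j..<t j + r}" for j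
  have strip_sets: "strip j \<in> sets borel" for j
    unfolding strip_def using measurable_sets[OF s, of "{t j..<t j + r}"] by simp
  define S where "S j = {\<omega>\<in>space M. Y \<omega> \<in> {t j - r..t j + 2 * r} \<and> V \<omega> \<in> strip j}" for j
  define T where "T j = {\<omega>\<in>space M. V \<omega> \<in> strip j}" for j
  have S_events: "S j \<in> events" and T_events: "T j \<in> events" for j
    unfolding S_def T_def using Y V strip_sets by measurable
  have "AE \<omega> in M. \<omega> \<in> {\<omega>\<in>space M. \<bar>Y \<omega> - s (V \<omega>)\<bar> \<le> r} \<longrightarrow> \<omega> \<in> (\<Union>j\<le>N. S j)"
    using s_bounded
  proof (rule eventually_mono, intro impI)
    fix \<omega> assume "\<bar>s (V \<omega>)\<bar> \<le> R" and "\<omega> \<in> {\<omega>\<in>space M. \<bar>Y \<omega> - s (V \<omega>)\<bar> \<le> r}"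
    moreover obtain j where "j \<le> N" "t j \<le> s (V \<omega>)" "s (V \<omega>) < t j + r"
      using half_open_strip_index[OF \<open>0 < r\<close> \<open>\<bar>s (V \<omega>)\<bar> \<le> R\<close>] unfolding N_def t_def by blast
    ultimately have "\<omega> \<in> S j"
      by (auto simp: S_def strip_def)
    with \<open>j \<le> N\<close> show "\<omega> \<in> (\<Union>j\<le>N. S j)" by auto
  qed
  then have "prob {\<omega>\<in>space M. \<bar>Y \<omega> - s (V \<omega>)\<bar> \<le> r} \<le> prob (\<Union>j\<le>N. S j)"
    using S_events by (intro finite_measure_mono_AE) auto
  also have "\<dots> \<le> (\<Sum>j\<le>N. prob (S j))"
    using S_events by (intro finite_measure_subadditive_finite) auto
  also have "\<dots> \<le> (\<Sum>j\<le>N. 3 * r * fbar * prob (T j))"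
  proof (rule sum_mono)
    fix j
    have "prob (S j) \<le> (t j + 2 * r - (t j - r)) * fbar * prob (T j)"
      unfolding S_def T_def using \<open>0 < r\<close>
      by (intro prob_strip_le[OF density f_le \<open>0 \<le> fbar\<close> V strip_sets]) auto
    then show "prob (S j) \<le> 3 * r * fbar * prob (T j)" by simp
  qed
  also have "\<dots> = 3 * r * fbar * prob (\<Union>j\<le>N. T j)"
  proof -
    have disjoint: "disjoint_family_on T {..N}"
      using disjoint_family_half_open_strips[OF \<open>0 < r\<close>, of "-R"]
      unfolding disjoint_family_on_def T_def strip_def t_def by blast
    show ?thesis
      using T_events by (subst finite_measure_finite_Union[OF _ _ disjoint]) (auto simp: sum_distrib_left)
  qed
  also have "\<dots> \<le> 3 * r * fbar"
    using \<open>0 < r\<close> \<open>0 \<le> fbar\<close> by (simp add: mult_left_le)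
  finally show ?thesis .
qed

end

section \<open>Max norm, l_p norms and well-separated zeros\<close>

lemma infnorm_le_cart:
  fixes x :: "real^'k"
  assumes "\<And>i. \<bar>x $ i\<bar> \<le> b"
  shows "infnorm x \<le> b"
  unfolding infnorm_cart using assms by (intro cSup_least) auto

lemma lp_norm_infinity: "lp_norm \<infinity> x = infnorm x"
  by (simp add: lp_norm_def infnorm_cart cSup_eq_Max[symmetric] full_SetCompr_eq)

lemma infnorm_le_lp_norm:
  fixes x :: "real^'k"
  assumes "1 \<le> p"
  shows "infnorm x \<le> lp_norm p x"
proof (cases "p = \<infinity>")
  case False
  define q where "q = real_of_ereal p"
  have "1 \<le> q" using assms False by (cases p) (auto simp: q_def)
  show ?thesis
  proof (rule infnorm_le_cart)
    fix i
    have "\<bar>x $ i\<bar> = (\<bar>x $ i\<bar> powr q) powr (1 / q)"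
      using \<open>1 \<le> q\<close> by (simp add: powr_powr)
    also have "\<dots> \<le> (\<Sum>i\<in>UNIV. \<bar>x $ i\<bar> powr q) powr (1 / q)"
      using \<open>1 \<le> q\<close> by (intro powr_mono2 member_le_sum) auto
    finally show "\<bar>x $ i\<bar> \<le> lp_norm p x"
      using False by (simp add: lp_norm_def q_def)
  qed
qed (simp add: lp_norm_infinity)

lemma lp_norm_le_card_infnorm:
  fixes x :: "real^'k"
  assumes "1 \<le> p"
  shows "lp_norm p x \<le> CARD('k) * infnorm x"
proof (cases "p = \<infinity>")
  case True
  have "1 * infnorm x \<le> CARD('k) * infnorm x"
    by (intro mult_right_mono infnorm_pos_le) (simp add: Suc_le_eq)
  then show ?thesis using True by (simp add: lp_norm_infinity)
next
  case False
  define q where "q = real_of_ereal p"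
  define K where "K = real CARD('k)"
  have "1 \<le> q" using assms False by (cases p) (auto simp: q_def)
  have "1 \<le> K" by (simp add: K_def Suc_le_eq)
  have "lp_norm p x = (\<Sum>i\<in>UNIV. \<bar>x $ i\<bar> powr q) powr (1 / q)"
    using False by (simp add: lp_norm_def q_def)
  also have "\<dots> \<le> (\<Sum>i\<in>(UNIV::'k set). infnorm x powr q) powr (1 / q)"
    using \<open>1 \<le> q\<close> by (intro powr_mono2 sum_mono component_le_infnorm_cart sum_nonneg) auto
  also have "\<dots> = K powr (1 / q) * infnorm x"
    using \<open>1 \<le> q\<close> \<open>1 \<le> K\<close> by (simp add: K_def powr_mult powr_powr infnorm_pos_le)
  also have "\<dots> \<le> K powr 1 * infnorm x"
    using \<open>1 \<le> q\<close> \<open>1 \<le> K\<close> by (intro mult_right_mono powr_mono infnorm_pos_le) auto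
  finally show ?thesis using \<open>1 \<le> K\<close> by (simp add: K_def)
qed

lemma infnorm_at_lp_argmin_le:
  fixes ghat g :: "'a \<Rightarrow> real^'k" and u :: real
  assumes "1 \<le> p" "g \<theta>\<^sub>0 = 0"
    and argmin: "lp_norm p (ghat \<theta>) \<le> lp_norm p (ghat \<theta>\<^sub>0)"
    and close: "infnorm (ghat \<theta> - g \<theta>) \<le> u" "infnorm (ghat \<theta>\<^sub>0 - g \<theta>\<^sub>0) \<le> u"
  shows "infnorm (g \<theta>) \<le> (CARD('k) + 1) * u"
proof -
  have "infnorm (g \<theta>) \<le> infnorm (ghat \<theta>) + u"
    using absdiff_infnorm[of "ghat \<theta>" "g \<theta>"] close(1) by linarith
  also have "infnorm (ghat \<theta>) \<le> lp_norm p (ghat \<theta>\<^sub>0)"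
    using order_trans[OF infnorm_le_lp_norm[OF \<open>1 \<le> p\<close>] argmin] .
  also have "lp_norm p (ghat \<theta>\<^sub>0) \<le> CARD('k) * u"
    using order_trans[OF lp_norm_le_card_infnorm[OF \<open>1 \<le> p\<close>] mult_left_mono[OF close(2)]]
      \<open>g \<theta>\<^sub>0 = 0\<close> by simp
  finally show ?thesis by (simp add: algebra_simps)
qed

lemma compact_continuous_pos_bounded_below:
  fixes G :: "'a::metric_space \<Rightarrow> real"
  assumes "compact K" "continuous_on K G" "\<And>\<theta>. \<theta> \<in> K \<Longrightarrow> \<theta> \<noteq> \<theta>0 \<Longrightarrow> 0 < G \<theta>" "0 < \<epsilon>"
  obtains \<eta> where "0 < \<eta>" "\<And>\<theta>. \<theta> \<in> K \<Longrightarrow> \<epsilon> \<le> dist \<theta> \<theta>0 \<Longrightarrow> \<eta> \<le> G \<theta>"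
proof (cases "K \<inter> {\<theta>. \<epsilon> \<le> dist \<theta> \<theta>0} = {}")
  case True
  then show ?thesis using that[of 1] by auto
next
  case False
  have "compact (K \<inter> {\<theta>. \<epsilon> \<le> dist \<theta> \<theta>0})"
    by (intro compact_Int_closed \<open>compact K\<close> closed_Collect_le continuous_intros)
  then obtain \<theta>min where "\<theta>min \<in> K" "\<epsilon> \<le> dist \<theta>min \<theta>0"
    and min: "\<And>\<theta>. \<theta> \<in> K \<Longrightarrow> \<epsilon> \<le> dist \<theta> \<theta>0 \<Longrightarrow> G \<theta>min \<le> G \<theta>"
    using continuous_attains_inf[OF _ False continuous_on_subset[OF assms(2)]] by auto
  moreover from this have "\<theta>min \<noteq> \<theta>0" using \<open>0 < \<epsilon>\<close> by auto
  ultimately have "0 < G \<theta>min" using assms(3) by blast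
  with min show ?thesis using that by blast
qed

section \<open>The summands of the moment function\<close>

type_synonym 'k observation = "real \<times> (real^'k) \<times> (real^'k)"

text \<open>Clipping \<open>z $ c\<close> to \<open>[-m, m]\<close> changes nothing almost surely but makes the summand bounded
  everywhere, as Hoeffding's inequality requires.\<close>

definition moment_term :: "real \<Rightarrow> real \<Rightarrow> real^'k \<Rightarrow> 'k \<Rightarrow> 'k observation \<Rightarrow> real" where
  "moment_term \<tau> m \<theta> c = (\<lambda>(y, w, z). ((if y \<le> w \<bullet> \<theta> then 1 else 0) - \<tau>) * max (- m) (min m (z $ c)))"

definition band :: "real^'k \<Rightarrow> real \<Rightarrow> 'k observation \<Rightarrow> real" where
  "band \<theta> r = (\<lambda>(y, w, z). if \<bar>y - w \<bullet> \<theta>\<bar> \<le> r then 1 else 0)"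

lemma moment_term_measurable [measurable]:
  fixes \<theta> :: "real^'k" shows "moment_term \<tau> m \<theta> c \<in> borel_measurable borel"
proof -
  let ?below = "{x :: 'k observation. fst x \<le> fst (snd x) \<bullet> \<theta>}"
  let ?clip = "\<lambda>x :: 'k observation. max (- m) (min m (snd (snd x) $ c))"
  have "?below \<in> sets borel"
    by (intro borel_closed closed_Collect_le continuous_intros)
  moreover have "?clip \<in> borel_measurable borel"
    by (intro borel_measurable_continuous_onI continuous_intros)
  moreover have "moment_term \<tau> m \<theta> c = (\<lambda>x. (indicator ?below x - \<tau>) * ?clip x)"
    by (auto simp: moment_term_def indicator_def fun_eq_iff)
  ultimately show ?thesis
    by (auto intro!: borel_measurable_times borel_measurable_diff)
qed

lemma band_measurable [measurable]:
  fixes \<theta> :: "real^'k" shows "band \<theta> r \<in> borel_measurable borel"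
proof -
  let ?band = "{x :: 'k observation. \<bar>fst x - fst (snd x) \<bullet> \<theta>\<bar> \<le> r}"
  have "?band \<in> sets borel"
    by (intro borel_closed closed_Collect_le continuous_intros)
  moreover have "band \<theta> r = indicator ?band"
    by (auto simp: band_def indicator_def fun_eq_iff)
  ultimately show ?thesis by simp
qed

lemma abs_moment_term_le:
  assumes "0 \<le> m" "0 \<le> \<tau>" "\<tau> \<le> 1"
  shows "\<bar>moment_term \<tau> m \<theta> c x\<bar> \<le> m"
proof -
  obtain y w z where x: "x = (y, w, z)" by (cases x) auto
  have "\<bar>(if y \<le> w \<bullet> \<theta> then 1 else 0) - \<tau>\<bar> \<le> 1" "\<bar>max (- m) (min m (z $ c))\<bar> \<le> m"
    using assms by auto
  then show ?thesis
    unfolding x moment_term_def by (simp add: abs_mult mult_mono[of _ 1 _ m, simplified])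
qed

lemma abs_band_le: "\<bar>band \<theta> r x\<bar> \<le> 1"
  by (auto simp: band_def split: prod.split)

lemma moment_term_diff_le:
  assumes "0 \<le> m" "norm w \<le> m" "m * dist \<theta> \<theta>' \<le> r"
  shows "\<bar>moment_term \<tau> m \<theta> c (y, w, z) - moment_term \<tau> m \<theta>' c (y, w, z)\<bar> \<le> m * band \<theta> r (y, w, z)"
proof (cases "(y \<le> w \<bullet> \<theta>) = (y \<le> w \<bullet> \<theta>')")
  case True
  then show ?thesis using \<open>0 \<le> m\<close> by (simp add: moment_term_def band_def)
next
  case False
  have "\<bar>w \<bullet> \<theta> - w \<bullet> \<theta>'\<bar> \<le> norm w * dist \<theta> \<theta>'"
    using Cauchy_Schwarz_ineq2[of w "\<theta> - \<theta>'"] by (simp add: inner_diff_right dist_norm)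
  also have "\<dots> \<le> r"
    using assms by (meson mult_right_mono order_trans zero_le_dist)
  finally have "band \<theta> r (y, w, z) = 1"
    using False by (auto simp: band_def)
  moreover have "\<bar>max (- m) (min m (z $ c))\<bar> \<le> m" using \<open>0 \<le> m\<close> by auto
  ultimately show ?thesis
    using False by (auto simp: moment_term_def algebra_simps)
qed

section \<open>The i.i.d. quantile moment model\<close>

lemma borel_measurable_vec_nth [measurable (raw)]:
  fixes f :: "'a \<Rightarrow> real^'k"
  assumes "f \<in> borel_measurable M"
  shows "(\<lambda>x. f x $ i) \<in> borel_measurable M"
  using assms by (rule measurable_compose) (intro borel_measurable_continuous_onI continuous_intros)

lemma integral_vec_nth:
  fixes f :: "'a \<Rightarrow> real^'k"
  assumes "integrable M f"
  shows "(\<integral>x. f x $ c \<partial>M) = integral\<^sup>L M f $ c"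
  using assms by (simp add: cart_eq_inner_axis)

locale quantile_moment_model = prob_space M
  for M :: "'a measure"
    and Y :: "nat \<Rightarrow> 'a \<Rightarrow> real" and W Z :: "nat \<Rightarrow> 'a \<Rightarrow> real^'k"
    and \<tau> m fbar :: real and f :: "'k observation \<Rightarrow> real" +
  assumes tau: "0 < \<tau>" "\<tau> < 1"
    and obs_measurable [measurable]: "\<And>i. (\<lambda>\<omega>. (Y i \<omega>, W i \<omega>, Z i \<omega>)) \<in> borel_measurable M"
    and indep: "indep_vars (\<lambda>_. borel) (\<lambda>i \<omega>. (Y i \<omega>, W i \<omega>, Z i \<omega>)) UNIV"
    and ident: "\<And>i. distr M borel (\<lambda>\<omega>. (Y i \<omega>, W i \<omega>, Z i \<omega>))
                    = distr M borel (\<lambda>\<omega>. (Y 0 \<omega>, W 0 \<omega>, Z 0 \<omega>))"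
    and bounded: "AE \<omega> in M. norm (Z 0 \<omega>) < m \<and> norm (W 0 \<omega>) < m"
    and density: "\<forall>A B. A \<in> sets borel \<longrightarrow> B \<in> sets borel \<longrightarrow>
             prob {\<omega> \<in> space M. Y 0 \<omega> \<in> A \<and> (W 0 \<omega>, Z 0 \<omega>) \<in> B}
             = expectation (\<lambda>\<omega>. indicator B (W 0 \<omega>, Z 0 \<omega>) * (LBINT y:A. f (y, W 0 \<omega>, Z 0 \<omega>)))"
    and density_nonneg: "\<And>x. 0 \<le> f x"
    and density_bounded: "AE \<omega> in M. \<forall>y. f (y, W 0 \<omega>, Z 0 \<omega>) \<le> fbar"
begin

abbreviation obs :: "nat \<Rightarrow> 'a \<Rightarrow> 'k observation" where
  "obs i \<omega> \<equiv> (Y i \<omega>, W i \<omega>, Z i \<omega>)"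

abbreviation g :: "real^'k \<Rightarrow> real^'k" where
  "g \<equiv> g_pop M (Y 0) (W 0) (Z 0) \<tau>"

abbreviation ghat :: "nat \<Rightarrow> real^'k \<Rightarrow> 'a \<Rightarrow> real^'k" where
  "ghat \<equiv> g_hat Y W Z \<tau>"

definition mean :: "('k observation \<Rightarrow> real) \<Rightarrow> real" where
  "mean h = expectation (\<lambda>\<omega>. h (obs 0 \<omega>))"

definition sample_mean :: "nat \<Rightarrow> ('k observation \<Rightarrow> real) \<Rightarrow> 'a \<Rightarrow> real" where
  "sample_mean n h \<omega> = (\<Sum>i<n. h (obs i \<omega>)) / real n"

lemma Y_measurable [measurable]: "Y i \<in> borel_measurable M"
  and W_measurable [measurable]: "W i \<in> borel_measurable M"
  and Z_measurable [measurable]: "Z i \<in> borel_measurable M"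
proof -
  have "(\<lambda>\<omega>. fst (obs i \<omega>)) \<in> borel_measurable M"
    "(\<lambda>\<omega>. fst (snd (obs i \<omega>))) \<in> borel_measurable M"
    "(\<lambda>\<omega>. snd (snd (obs i \<omega>))) \<in> borel_measurable M"
    by (intro measurable_compose[OF obs_measurable[of i]] borel_measurable_continuous_onI continuous_intros)+
  then show "Y i \<in> borel_measurable M" "W i \<in> borel_measurable M" "Z i \<in> borel_measurable M"
    by simp_all
qed

lemma m_pos: "0 < m"
proof -
  have "AE \<omega> in M. 0 < m"
    using bounded by (rule eventually_mono) (auto intro: le_less_trans[OF norm_ge_zero])
  then show ?thesis by simp
qed

lemma fbar_nonneg: "0 \<le> fbar"
proof -
  have "AE \<omega> in M. 0 \<le> fbar"
    using density_bounded by (rule eventually_mono) (use density_nonneg in \<open>meson order_trans\<close>)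
  then show ?thesis by simp
qed

lemma AE_obs_bounded: "AE \<omega> in M. \<forall>i. norm (Z i \<omega>) < m \<and> norm (W i \<omega>) < m"
proof (subst AE_all_countable, intro allI)
  fix i
  let ?bounded = "{x :: 'k observation. norm (snd (snd x)) < m \<and> norm (fst (snd x)) < m}"
  have "?bounded \<in> sets borel"
    by (intro borel_open open_Collect_conj open_Collect_less continuous_intros)
  moreover have "AE \<omega> in M. obs 0 \<omega> \<in> ?bounded" using bounded by simp
  ultimately have "AE x in distr M borel (obs 0). x \<in> ?bounded"
    by (subst AE_distr_iff) auto
  then have "AE x in distr M borel (obs i). x \<in> ?bounded"
    unfolding ident[of i] .
  with \<open>?bounded \<in> sets borel\<close> have "AE \<omega> in M. obs i \<omega> \<in> ?bounded"
    by (subst (asm) AE_distr_iff) auto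
  then show "AE \<omega> in M. norm (Z i \<omega>) < m \<and> norm (W i \<omega>) < m" by simp
qed

lemma integrable_mean:
  fixes B :: real
  assumes "h \<in> borel_measurable borel" "\<And>x. \<bar>h x\<bar> \<le> B"
  shows "integrable M (\<lambda>\<omega>. h (obs 0 \<omega>))"
  using assms by (intro integrable_const_bound[where B = B]) auto

lemma g_component: "g \<theta> $ c = mean (moment_term \<tau> m \<theta> c)"
proof -
  let ?summand = "\<lambda>\<omega>. ((if Y 0 \<omega> \<le> W 0 \<omega> \<bullet> \<theta> then 1 else 0) - \<tau>) *\<^sub>R Z 0 \<omega>"
  have "AE \<omega> in M. ?summand \<omega> $ c = moment_term \<tau> m \<theta> c (obs 0 \<omega>)"
    using bounded
  proof (rule eventually_mono)
    fix \<omega> assume "norm (Z 0 \<omega>) < m \<and> norm (W 0 \<omega>) < m"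
    then have "\<bar>Z 0 \<omega> $ c\<bar> \<le> m" using component_le_norm_cart[of "Z 0 \<omega>" c] by linarith
    then show "?summand \<omega> $ c = moment_term \<tau> m \<theta> c (obs 0 \<omega>)"
      by (simp add: moment_term_def abs_le_iff)
  qed
  moreover have "integrable M ?summand"
  proof (rule integrable_const_bound[where B = m])
    show "AE \<omega> in M. norm (?summand \<omega>) \<le> m"
      using bounded
    proof (rule eventually_mono)
      fix \<omega> assume "norm (Z 0 \<omega>) < m \<and> norm (W 0 \<omega>) < m"
      moreover have "\<bar>(if Y 0 \<omega> \<le> W 0 \<omega> \<bullet> \<theta> then 1 else 0) - \<tau>\<bar> \<le> 1" using tau by auto
      ultimately show "norm (?summand \<omega>) \<le> m"
        using mult_mono[of _ 1 "norm (Z 0 \<omega>)" m] by simp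
    qed
  qed measurable
  ultimately show ?thesis
    unfolding g_pop_def mean_def
    by (subst integral_vec_nth[symmetric]) (auto intro!: integral_cong_AE)
qed

lemma ghat_component:
  assumes "\<And>i. norm (Z i \<omega>) < m"
  shows "ghat n \<theta> \<omega> $ c = sample_mean n (moment_term \<tau> m \<theta> c) \<omega>"
proof -
  have "- m \<le> Z i \<omega> $ c" "Z i \<omega> $ c \<le> m" for i
    using assms[of i] component_le_norm_cart[of "Z i \<omega>" c] by linarith+
  then show ?thesis
    by (simp add: g_hat_def sample_mean_def moment_term_def max_absorb2 min_absorb2)
qed

lemma mean_band_le:
  assumes "0 < r"
  shows "mean (band \<theta> r) \<le> 3 * r * fbar"
proof -
  let ?band = "{\<omega>\<in>space M. \<bar>Y 0 \<omega> - W 0 \<omega> \<bullet> \<theta>\<bar> \<le> r}"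
  have "?band \<in> events" by measurable
  have "mean (band \<theta> r) = expectation (indicator ?band)"
    unfolding mean_def by (rule Bochner_Integration.integral_cong) (auto simp: band_def indicator_def)
  also have "\<dots> = prob ?band"
    using \<open>?band \<in> events\<close> by (simp add: less_top[symmetric])
  also have "\<dots> = prob {\<omega>\<in>space M. \<bar>Y 0 \<omega> - fst (W 0 \<omega>, Z 0 \<omega>) \<bullet> \<theta>\<bar> \<le> r}"
    by simp
  also have "\<dots> \<le> 3 * r * fbar"
  proof (rule prob_band_le[where s = "\<lambda>v. fst v \<bullet> \<theta>" and V = "\<lambda>\<omega>. (W 0 \<omega>, Z 0 \<omega>)"
        and R = "m * norm \<theta>"])
    show "AE \<omega> in M. \<bar>fst (W 0 \<omega>, Z 0 \<omega>) \<bullet> \<theta>\<bar> \<le> m * norm \<theta>"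
      using bounded
    proof (rule eventually_mono)
      fix \<omega> assume "norm (Z 0 \<omega>) < m \<and> norm (W 0 \<omega>) < m"
      then show "\<bar>fst (W 0 \<omega>, Z 0 \<omega>) \<bullet> \<theta>\<bar> \<le> m * norm \<theta>"
        using Cauchy_Schwarz_ineq2[of "W 0 \<omega>" \<theta>] by (simp add: order_trans mult_right_mono)
    qed
  qed (use density density_bounded fbar_nonneg \<open>0 < r\<close> in \<open>auto intro!: borel_measurable_continuous_onI continuous_intros\<close>)
  finally show ?thesis .
qed

lemma abs_moment_term_le_m: "\<bar>moment_term \<tau> m \<theta> c x\<bar> \<le> m"
  by (rule abs_moment_term_le) (use m_pos tau in auto)

lemma mean_moment_term_diff_le:
  assumes "m * dist \<theta> \<theta>' \<le> r"
  shows "\<bar>mean (moment_term \<tau> m \<theta> c) - mean (moment_term \<tau> m \<theta>' c)\<bar> \<le> m * mean (band \<theta> r)"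
proof -
  let ?h = "\<lambda>\<omega>. moment_term \<tau> m \<theta> c (obs 0 \<omega>)" and ?h' = "\<lambda>\<omega>. moment_term \<tau> m \<theta>' c (obs 0 \<omega>)"
  have int: "integrable M ?h" "integrable M ?h'" "integrable M (\<lambda>\<omega>. band \<theta> r (obs 0 \<omega>))"
    by (rule integrable_mean[OF moment_term_measurable abs_moment_term_le_m]
        integrable_mean[OF band_measurable abs_band_le])+
  have "\<bar>mean (moment_term \<tau> m \<theta> c) - mean (moment_term \<tau> m \<theta>' c)\<bar> = \<bar>expectation (\<lambda>\<omega>. ?h \<omega> - ?h' \<omega>)\<bar>"
    using int by (simp add: mean_def)
  also have "\<dots> \<le> expectation (\<lambda>\<omega>. \<bar>?h \<omega> - ?h' \<omega>\<bar>)"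
    by (rule integral_abs_bound)
  also have "\<dots> \<le> expectation (\<lambda>\<omega>. m * band \<theta> r (obs 0 \<omega>))"
  proof (rule integral_mono_AE)
    show "AE \<omega> in M. \<bar>?h \<omega> - ?h' \<omega>\<bar> \<le> m * band \<theta> r (obs 0 \<omega>)"
      using bounded
      by (rule eventually_mono) (intro moment_term_diff_le[OF less_imp_le[OF m_pos] _ assms], simp)
  qed (use int in auto)
  also have "\<dots> = m * mean (band \<theta> r)"
    by (simp add: mean_def)
  finally show ?thesis .
qed

lemma sample_mean_moment_term_diff_le:
  assumes "\<And>i. norm (W i \<omega>) \<le> m" "m * dist \<theta> \<theta>' \<le> r"
  shows "\<bar>sample_mean n (moment_term \<tau> m \<theta> c) \<omega> - sample_mean n (moment_term \<tau> m \<theta>' c) \<omega>\<bar>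
    \<le> m * sample_mean n (band \<theta> r) \<omega>"
proof -
  have "\<bar>\<Sum>i<n. moment_term \<tau> m \<theta> c (obs i \<omega>) - moment_term \<tau> m \<theta>' c (obs i \<omega>)\<bar>
      \<le> (\<Sum>i<n. \<bar>moment_term \<tau> m \<theta> c (obs i \<omega>) - moment_term \<tau> m \<theta>' c (obs i \<omega>)\<bar>)"
    by (rule sum_abs)
  also have "\<dots> \<le> (\<Sum>i<n. m * band \<theta> r (obs i \<omega>))"
    using assms m_pos by (intro sum_mono moment_term_diff_le) auto
  finally show ?thesis
    by (simp add: sample_mean_def sum_subtractf sum_distrib_left diff_divide_distrib[symmetric]
        divide_right_mono)
qed

lemma ghat_deviation_le:
  assumes obs_bounded: "\<And>i. norm (Z i \<omega>) < m \<and> norm (W i \<omega>) < m"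
    and "0 < r" "m * dist t \<theta> \<le> r"
    and close_moment: "\<bar>sample_mean n (moment_term \<tau> m t c) \<omega> - mean (moment_term \<tau> m t c)\<bar> < v"
    and close_band: "\<bar>sample_mean n (band t r) \<omega> - mean (band t r)\<bar> < v"
  shows "\<bar>ghat n \<theta> \<omega> $ c - g \<theta> $ c\<bar> \<le> 6 * m * r * fbar + (m + 1) * v"
proof -
  have W_le: "norm (W i \<omega>) \<le> m" for i
    using obs_bounded[of i] by simp
  have "\<bar>sample_mean n (moment_term \<tau> m \<theta> c) \<omega> - sample_mean n (moment_term \<tau> m t c) \<omega>\<bar>
      \<le> m * sample_mean n (band t r) \<omega>"
    using sample_mean_moment_term_diff_le[OF W_le \<open>m * dist t \<theta> \<le> r\<close>] by (simp add: abs_minus_commute)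
  moreover have "m * sample_mean n (band t r) \<omega> \<le> m * mean (band t r) + m * v"
    using close_band m_pos by (simp add: distrib_left[symmetric] mult_left_mono)
  moreover have "\<bar>mean (moment_term \<tau> m t c) - mean (moment_term \<tau> m \<theta> c)\<bar> \<le> m * mean (band t r)"
    using \<open>m * dist t \<theta> \<le> r\<close> by (rule mean_moment_term_diff_le)
  moreover have "m * mean (band t r) \<le> m * (3 * r * fbar)"
    using mean_band_le[OF \<open>0 < r\<close>] m_pos by (simp add: mult_left_mono)
  ultimately show ?thesis
    using close_moment obs_bounded by (simp add: ghat_component g_component algebra_simps; linarith)
qed

lemma g_lipschitz: "infnorm (g \<theta> - g \<theta>') \<le> 3 * m * m * fbar * dist \<theta> \<theta>'"
proof (cases "\<theta> = \<theta>'")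
  case False
  define r where "r = m * dist \<theta> \<theta>'"
  have "0 < r" using False m_pos by (simp add: r_def)
  show ?thesis
  proof (rule infnorm_le_cart)
    fix c
    have "\<bar>(g \<theta> - g \<theta>') $ c\<bar> \<le> m * mean (band \<theta> r)"
      using mean_moment_term_diff_le[of \<theta> \<theta>' r c] by (simp add: g_component r_def)
    also have "\<dots> \<le> m * (3 * r * fbar)"
      using mean_band_le[OF \<open>0 < r\<close>] m_pos by (simp add: mult_left_mono)
    finally show "\<bar>(g \<theta> - g \<theta>') $ c\<bar> \<le> 3 * m * m * fbar * dist \<theta> \<theta>'"
      by (simp add: r_def algebra_simps)
  qed
qed (simp add: infnorm_0)

lemma continuous_on_infnorm_g: "continuous_on UNIV (\<lambda>\<theta>. infnorm (g \<theta>))"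
proof (rule lipschitz_on_continuous_on[OF lipschitz_onI])
  show "dist (infnorm (g \<theta>)) (infnorm (g \<theta>')) \<le> 3 * m * m * fbar * dist \<theta> \<theta>'" for \<theta> \<theta>'
    using absdiff_infnorm[of "g \<theta>" "g \<theta>'"] g_lipschitz[of \<theta> \<theta>'] by (simp add: dist_real_def)
qed (use m_pos fbar_nonneg in simp)

lemma weak_law_finite_family:
  assumes "finite F" "0 < v"
    and F_measurable: "F \<subseteq> borel_measurable borel"
    and F_bounded: "\<forall>h\<in>F. \<forall>x. \<bar>h x\<bar> \<le> B"
  shows "(\<lambda>n. prob (\<Union>h\<in>F. {\<omega>\<in>space M. v \<le> \<bar>sample_mean n h \<omega> - mean h\<bar>})) \<longlonglongrightarrow> 0"
proof (rule tendsto_sandwich[OF _ _ tendsto_const])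
  have events: "{\<omega>\<in>space M. v \<le> \<bar>sample_mean n h \<omega> - mean h\<bar>} \<in> events" if "h \<in> F" for h n
  proof -
    have [measurable]: "h \<in> borel_measurable borel" using F_measurable that by blast
    show ?thesis unfolding sample_mean_def by measurable
  qed
  show "\<forall>\<^sub>F n in sequentially. prob (\<Union>h\<in>F. {\<omega>\<in>space M. v \<le> \<bar>sample_mean n h \<omega> - mean h\<bar>})
      \<le> (\<Sum>h\<in>F. prob {\<omega>\<in>space M. v \<le> \<bar>sample_mean n h \<omega> - mean h\<bar>})"
    using events \<open>finite F\<close> by (intro always_eventually allI finite_measure_subadditive_finite) auto
  show "(\<lambda>n. \<Sum>h\<in>F. prob {\<omega>\<in>space M. v \<le> \<bar>sample_mean n h \<omega> - mean h\<bar>}) \<longlonglongrightarrow> 0"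
  proof (rule tendsto_null_sum)
    fix h assume "h \<in> F"
    show "(\<lambda>n. prob {\<omega>\<in>space M. v \<le> \<bar>sample_mean n h \<omega> - mean h\<bar>}) \<longlonglongrightarrow> 0"
      unfolding sample_mean_def mean_def
      using \<open>h \<in> F\<close> F_measurable F_bounded \<open>0 < v\<close>
      by (intro weak_law_bounded_iid[OF obs_measurable indep ident, where B = B]) auto
  qed
qed simp

lemma deviation_budget:
  assumes "0 < u"
  obtains r v where "0 < r" "0 < v" "6 * m * r * fbar + (m + 1) * v \<le> u"
proof (rule that)
  have "0 \<le> m * fbar" using m_pos fbar_nonneg by simp
  then show "0 < u / (12 * m * fbar + 1)" "0 < u / (2 * (m + 1))"
    using \<open>0 < u\<close> m_pos by simp_all
  have "6 * m * (u / (12 * m * fbar + 1)) * fbar \<le> u / 2"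
    using \<open>0 \<le> m * fbar\<close> \<open>0 < u\<close> by (simp add: field_simps)
  moreover have "(m + 1) * (u / (2 * (m + 1))) = u / 2"
    using m_pos by (simp add: field_simps)
  ultimately show "6 * m * (u / (12 * m * fbar + 1)) * fbar + (m + 1) * (u / (2 * (m + 1))) \<le> u"
    by linarith
qed

text \<open>Bracketing: by \<open>ghat_deviation_le\<close>, closeness on a finite \<open>r/m\<close>-net of \<open>\<Theta>\<close> for the
  summands and the band functions gives closeness on all of \<open>\<Theta>\<close>.\<close>

lemma uniform_deviation:
  fixes \<Theta> :: "(real^'k) set"
  assumes "compact \<Theta>" "0 < u"
  obtains B where "\<And>n. B n \<in> events" "(\<lambda>n. prob (B n)) \<longlonglongrightarrow> 0"
    and "\<And>n. AE \<omega> in M. \<omega> \<notin> B n \<longrightarrow> (\<forall>\<theta>\<in>\<Theta>. infnorm (ghat n \<theta> \<omega> - g \<theta>) \<le> u)"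
proof -
  obtain r v where "0 < r" "0 < v" and budget: "6 * m * r * fbar + (m + 1) * v \<le> u"
    using deviation_budget[OF \<open>0 < u\<close>] .
  obtain T where "finite T" and T: "\<Theta> \<subseteq> (\<Union>t\<in>T. ball t (r / m))"
    using seq_compact_imp_totally_bounded[OF compact_imp_seq_compact[OF \<open>compact \<Theta>\<close>]]
      \<open>0 < r\<close> m_pos by (metis divide_pos_pos)
  define F where "F = (\<lambda>(t, c). moment_term \<tau> m t c) ` (T \<times> UNIV) \<union> (\<lambda>t. band t r) ` T"
  define B where "B n = (\<Union>h\<in>F. {\<omega>\<in>space M. v \<le> \<bar>sample_mean n h \<omega> - mean h\<bar>})" for n
  show thesis
  proof (rule that)
    have F_bounded: "\<forall>h\<in>F. \<forall>x. \<bar>h x\<bar> \<le> max m 1"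
      by (auto simp: F_def intro: order_trans[OF abs_moment_term_le_m] order_trans[OF abs_band_le])
    show "B n \<in> events" for n
      unfolding B_def sample_mean_def using \<open>finite T\<close>
      by (intro sets.finite_UN) (auto simp: F_def)
    have "finite F" using \<open>finite T\<close> by (simp add: F_def)
    moreover have "F \<subseteq> borel_measurable borel" by (auto simp: F_def)
    ultimately show "(\<lambda>n. prob (B n)) \<longlonglongrightarrow> 0"
      unfolding B_def using \<open>0 < v\<close> F_bounded by (intro weak_law_finite_family) auto
    show "AE \<omega> in M. \<omega> \<notin> B n \<longrightarrow> (\<forall>\<theta>\<in>\<Theta>. infnorm (ghat n \<theta> \<omega> - g \<theta>) \<le> u)" for n
      using AE_obs_bounded
    proof (rule AE_mp[OF _ AE_I2], intro impI ballI infnorm_le_cart)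
      fix \<omega> \<theta> c
      assume obs_bounded: "\<forall>i. norm (Z i \<omega>) < m \<and> norm (W i \<omega>) < m"
        and "\<omega> \<in> space M" "\<omega> \<notin> B n" "\<theta> \<in> \<Theta>"
      then obtain t where "t \<in> T" "dist t \<theta> < r / m" using T by auto
      then have "m * dist t \<theta> \<le> r" using m_pos by (simp add: field_simps)
      have "\<bar>sample_mean n h \<omega> - mean h\<bar> < v" if "h \<in> F" for h
        using \<open>\<omega> \<in> space M\<close> \<open>\<omega> \<notin> B n\<close> that by (auto simp: B_def not_le)
      then have "\<bar>ghat n \<theta> \<omega> $ c - g \<theta> $ c\<bar> \<le> 6 * m * r * fbar + (m + 1) * v"
        using \<open>t \<in> T\<close> by (intro ghat_deviation_le[OF _ \<open>0 < r\<close> \<open>m * dist t \<theta> \<le> r\<close>])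
          (auto simp: obs_bounded F_def)
      then show "\<bar>(ghat n \<theta> \<omega> - g \<theta>) $ c\<bar> \<le> u" using budget by simp
    qed
  qed
qed

text \<open>No measurability of \<open>\<theta>hat\<close> is needed: the bad event is covered, up to a null set, by
  a measurable event of vanishing probability.\<close>

theorem consistency:
  fixes \<Theta> :: "(real^'k) set" and \<theta>0 :: "real^'k" and \<theta>hat :: "nat \<Rightarrow> 'a \<Rightarrow> real^'k" and p :: ereal
  assumes "compact \<Theta>" "\<theta>0 \<in> \<Theta>" "g \<theta>0 = 0" and identified: "\<And>\<theta>. \<theta> \<in> \<Theta> \<Longrightarrow> g \<theta> = 0 \<Longrightarrow> \<theta> = \<theta>0"
    and "1 \<le> p"
    and est_in: "\<And>n \<omega>. \<omega> \<in> space M \<Longrightarrow> \<theta>hat n \<omega> \<in> \<Theta>"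
    and est_min: "\<And>n \<omega> \<theta>. \<omega> \<in> space M \<Longrightarrow> \<theta> \<in> \<Theta> \<Longrightarrow>
          lp_norm p (ghat n (\<theta>hat n \<omega>) \<omega>) \<le> lp_norm p (ghat n \<theta> \<omega>)"
    and "0 < \<epsilon>"
  shows "(\<lambda>n. prob {\<omega> \<in> space M. dist (\<theta>hat n \<omega>) \<theta>0 > \<epsilon>}) \<longlonglongrightarrow> 0"
proof -
  obtain \<eta> where "0 < \<eta>" and separated: "\<And>\<theta>. \<theta> \<in> \<Theta> \<Longrightarrow> \<epsilon> \<le> dist \<theta> \<theta>0 \<Longrightarrow> \<eta> \<le> infnorm (g \<theta>)"
    using compact_continuous_pos_bounded_below[OF \<open>compact \<Theta>\<close> continuous_on_subset[OF continuous_on_infnorm_g]]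
      identified infnorm_pos_lt \<open>0 < \<epsilon>\<close> by blast
  define u where "u = \<eta> / (2 * (CARD('k) + 1))"
  have "0 < u"
    unfolding u_def using \<open>0 < \<eta>\<close> by (intro divide_pos_pos) auto
  have "0 < real CARD('k) + 1" by simp
  then have "(CARD('k) + 1) * u = \<eta> / 2"
    by (simp add: u_def field_simps)
  then have "(CARD('k) + 1) * u < \<eta>" using \<open>0 < \<eta>\<close> by linarith
  obtain B where "\<And>n. B n \<in> events" "(\<lambda>n. prob (B n)) \<longlonglongrightarrow> 0"
    and uniform: "\<And>n. AE \<omega> in M. \<omega> \<notin> B n \<longrightarrow> (\<forall>\<theta>\<in>\<Theta>. infnorm (ghat n \<theta> \<omega> - g \<theta>) \<le> u)"
    using uniform_deviation[OF \<open>compact \<Theta>\<close> \<open>0 < u\<close>] by blast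
  have "prob {\<omega> \<in> space M. dist (\<theta>hat n \<omega>) \<theta>0 > \<epsilon>} \<le> prob (B n)" for n
  proof (rule finite_measure_mono_AE[OF _ \<open>B n \<in> events\<close>])
    show "AE \<omega> in M. \<omega> \<in> {\<omega> \<in> space M. dist (\<theta>hat n \<omega>) \<theta>0 > \<epsilon>} \<longrightarrow> \<omega> \<in> B n"
      using uniform[of n]
    proof (rule eventually_mono, intro impI)
      fix \<omega> assume close: "\<omega> \<notin> B n \<longrightarrow> (\<forall>\<theta>\<in>\<Theta>. infnorm (ghat n \<theta> \<omega> - g \<theta>) \<le> u)"
        and far: "\<omega> \<in> {\<omega> \<in> space M. dist (\<theta>hat n \<omega>) \<theta>0 > \<epsilon>}"
      show "\<omega> \<in> B n"
      proof (rule ccontr)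
        assume "\<omega> \<notin> B n"
        have "infnorm (g (\<theta>hat n \<omega>)) \<le> (CARD('k) + 1) * u"
          using far close \<open>\<omega> \<notin> B n\<close> est_in est_min \<open>\<theta>0 \<in> \<Theta>\<close>
          by (intro infnorm_at_lp_argmin_le[where ghat = "\<lambda>\<theta>. ghat n \<theta> \<omega>" and g = g and \<theta>\<^sub>0 = \<theta>0,
              OF \<open>1 \<le> p\<close> \<open>g \<theta>0 = 0\<close>]) auto
        moreover have "\<eta> \<le> infnorm (g (\<theta>hat n \<omega>))"
          using far est_in by (intro separated) auto
        ultimately show False using \<open>(CARD('k) + 1) * u < \<eta>\<close> by linarith
      qed
    qed
  qed
  then show ?thesis
    by (intro tendsto_sandwich[OF _ _ tendsto_const \<open>(\<lambda>n. prob (B n)) \<longlonglongrightarrow> 0\<close>]) auto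
qed

end

theorem lemma8:
  fixes M :: "'a measure"
    and Y :: "nat \<Rightarrow> 'a \<Rightarrow> real"
    and W Z :: "nat \<Rightarrow> 'a \<Rightarrow> real^'k"
    and \<tau> m fbar :: real
    and \<Theta> :: "(real^'k) set"
    and \<theta>0 :: "real^'k"
    and p :: ereal
    and \<theta>hat :: "nat \<Rightarrow> 'a \<Rightarrow> real^'k"
  assumes M: "prob_space M"
    and tau: "0 < \<tau>" "\<tau> < 1"
    and rv: "\<And>i. (\<lambda>\<omega>. (Y i \<omega>, W i \<omega>, Z i \<omega>)) \<in> borel_measurable M"
    and indep: "prob_space.indep_vars M (\<lambda>_. borel) (\<lambda>i \<omega>. (Y i \<omega>, W i \<omega>, Z i \<omega>)) UNIV"
    and ident: "\<And>i. distr M borel (\<lambda>\<omega>. (Y i \<omega>, W i \<omega>, Z i \<omega>))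
                    = distr M borel (\<lambda>\<omega>. (Y 0 \<omega>, W 0 \<omega>, Z 0 \<omega>))"
    and Theta_compact: "compact \<Theta>"
    and theta0_int: "\<theta>0 \<in> interior \<Theta>"
    and theta0_zero: "g_pop M (Y 0) (W 0) (Z 0) \<tau> \<theta>0 = 0"
    and theta0_unique: "\<And>\<theta>. \<theta> \<in> \<Theta> \<Longrightarrow> g_pop M (Y 0) (W 0) (Z 0) \<tau> \<theta> = 0 \<Longrightarrow> \<theta> = \<theta>0"
    and bounded: "AE \<omega> in M. norm (Z 0 \<omega>) < m \<and> norm (W 0 \<omega>) < m"
    and cond_density: "\<exists>f :: real \<times> (real^'k) \<times> (real^'k) \<Rightarrow> real.
          f \<in> borel_measurable borel \<and> (\<forall>x. 0 \<le> f x) \<and>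
          (\<forall>A B. A \<in> sets borel \<longrightarrow> B \<in> sets borel \<longrightarrow>
             measure M {\<omega> \<in> space M. Y 0 \<omega> \<in> A \<and> (W 0 \<omega>, Z 0 \<omega>) \<in> B}
             = integral\<^sup>L M (\<lambda>\<omega>. indicator B (W 0 \<omega>, Z 0 \<omega>)
                                 * (LBINT y:A. f (y, W 0 \<omega>, Z 0 \<omega>)))) \<and>
          (AE \<omega> in M. \<forall>y. f (y, W 0 \<omega>, Z 0 \<omega>) \<le> fbar)"
    and p: "1 \<le> p"
    and est_meas: "\<And>n. \<theta>hat n \<in> borel_measurable M"
    and est_in: "\<And>n \<omega>. \<omega> \<in> space M \<Longrightarrow> \<theta>hat n \<omega> \<in> \<Theta>"
    and est_min: "\<And>n \<omega> \<theta>. \<omega> \<in> space M \<Longrightarrow> \<theta> \<in> \<Theta> \<Longrightarrow>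
          lp_norm p (g_hat Y W Z \<tau> n (\<theta>hat n \<omega>) \<omega>) \<le> lp_norm p (g_hat Y W Z \<tau> n \<theta> \<omega>)"
  shows "\<forall>\<epsilon>>0. ((\<lambda>n. measure M {\<omega> \<in> space M. dist (\<theta>hat n \<omega>) \<theta>0 > \<epsilon>}) \<longlongrightarrow> 0) sequentially"
proof -
  obtain f :: "real \<times> (real^'k) \<times> (real^'k) \<Rightarrow> real" where density:
    "\<forall>x. 0 \<le> f x"
    "\<forall>A B. A \<in> sets borel \<longrightarrow> B \<in> sets borel \<longrightarrow>
       measure M {\<omega> \<in> space M. Y 0 \<omega> \<in> A \<and> (W 0 \<omega>, Z 0 \<omega>) \<in> B}
       = integral\<^sup>L M (\<lambda>\<omega>. indicator B (W 0 \<omega>, Z 0 \<omega>) * (LBINT y:A. f (y, W 0 \<omega>, Z 0 \<omega>)))"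
    "AE \<omega> in M. \<forall>y. f (y, W 0 \<omega>, Z 0 \<omega>) \<le> fbar"
    using cond_density by blast
  have "quantile_moment_model M Y W Z \<tau> m fbar f"
    unfolding quantile_moment_model_def quantile_moment_model_axioms_def
    using M tau rv indep ident bounded density by blast
  then interpret quantile_moment_model M Y W Z \<tau> m fbar f .
  show ?thesis
    using consistency[OF Theta_compact interior_subset[THEN subsetD, OF theta0_int] theta0_zero
        theta0_unique p est_in est_min] by blast
qed

end
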